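(* Agrachev–Gamkrelidze monomial bases of the free pre-Lie algebra with one generator $(\mathcal{T},\to)$ are tree-grounded. Precisely: define sets of monomials $\mathcal{M}_n$ recursively by $\mathcal{M}_1=\{\bullet\}$ and, given $\mathcal{M}_1,\dots,\mathcal{M}_{n-1}$ with a total order on $\mathcal{M}_1\sqcup\dots\sqcup\mathcal{M}_{n-1}$ which restricts to an arbitrary total order on each $\mathcal{M}_j$ and satisfies $x>x'$ whenever $x\in\mathcal{M}_j$, $x'\in\mathcal{M}_{j'}$, $j>j'$, $$\mathcal{M}_n=\Big\{x_1\to\big(x_2\to(\cdots\to(x_r\to\bullet)\cdots)\big)\ \Big|\ r\ge 1,\ x_k\in\mathcal{M}_{j_k},\ \textstyle\sum_{k=1}^r j_k=n-1,\ x_1\ge x_2\ge\cdots\ge x_r\Big\}.$$ Then for every $n\ge 1$, replacing the grafting $\to$ by the Butcher product $\circ\!\!\rightarrow$ in each monomial of $\mathcal{M}_n$ yields every non-planar rooted tree with $n$ vertices exactly once.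
   Context: $\mathcal{T}$ is the vector space spanned by non-planar rooted trees; $\bullet$ is the one-vertex tree. The grafting $s\to t=\sum_{v\in V(t)}s\to_v t$ (graft the root of $s$ by a new edge onto vertex $v$ of $t$) makes $\mathcal{T}$ the free pre-Lie algebra on $\bullet$, graded by number of vertices. $B_+(t_1\cdots t_k)$ denotes the tree obtained by attaching the roots of $t_1,\dots,t_k$ to a new root; the Butcher product is $s\circ\!\!\rightarrow B_+(t_1\cdots t_k)=B_+(s\,t_1\cdots t_k)$. A monomial is a parenthesized word in $\bullet$ and one binary operation; its lower-energy term is its evaluation with the Butcher product. A monomial basis (set of monomials whose grafting-evaluations form a basis) of the degree-$n$ component is tree-grounded if its lower-energy terms are exactly the rooted trees with $n$ vertices, each once. *)

theory Defs
  imports Main "HOL-Library.Multiset"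
begin

text \<open>Non-planar rooted trees: a root together with a multiset of subtrees.\<close>
datatype rtree = Node "rtree multiset"

definition bullet :: rtree where "bullet = Node {#}"

primrec nverts :: "rtree \<Rightarrow> nat" where
  "nverts (Node M) = Suc (sum_mset (image_mset nverts M))"

fun butcher :: "rtree \<Rightarrow> rtree \<Rightarrow> rtree" where
  "butcher s (Node M) = Node (add_mset s M)"

text \<open>Monomials: parenthesized words in the generator and one binary operation;
  Op a b stands for a \<rightarrow> b.\<close>
datatype mono = Gen | Op mono mono

primrec lower_energy :: "mono \<Rightarrow> rtree" where
  "lower_energy Gen = bullet"
| "lower_energy (Op a b) = butcher (lower_energy a) (lower_energy b)"

definition right_comb :: "mono list \<Rightarrow> mono" where
  "right_comb xs = foldr Op xs Gen"

text \<open>Agrachev--Gamkrelidze families: M n for n \<ge> 1 together with a total order R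
  (pairs (a,b) meaning a \<le> b) on the union of all M j, j \<ge> 1, which is compatible with degree.\<close>
definition AG_family :: "(nat \<Rightarrow> mono set) \<Rightarrow> mono rel \<Rightarrow> bool" where
  "AG_family M R \<longleftrightarrow>
     linear_order_on (\<Union>j\<in>{1..}. M j) R
   \<and> (\<forall>j j' x x'. 1 \<le> j' \<and> j' < j \<and> x \<in> M j \<and> x' \<in> M j' \<longrightarrow> (x', x) \<in> R \<and> x \<noteq> x')
   \<and> M 1 = {Gen}
   \<and> (\<forall>n\<ge>2. M n =
        {right_comb xs | xs js. xs \<noteq> [] \<and> length js = length xs
           \<and> (\<forall>k<length xs. 1 \<le> js ! k \<and> xs ! k \<in> M (js ! k))
           \<and> sum_list js = n - 1
           \<and> sorted_wrt (\<lambda>a b. (b, a) \<in> R) xs})"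

end

theory Submission
  imports Defs
begin

text \<open>A monomial of degree n \<ge> 2 is a right comb over a non-increasing list of monomials of
  smaller degree, and its lower-energy term is the tree whose root carries the multiset of the
  lower-energy terms of the list entries. A tree with n vertices is exactly a root carrying a
  multiset of trees with n - 1 vertices in total, and a multiset over a totally ordered set is
  the multiset of exactly one non-increasing list. Hence, by induction on n, lower_energy is a
  bijection from the degree-n monomials onto the trees with n vertices.\<close>

lemma sorted_wrt_mset_unique:
  assumes antisym: "\<And>a b. P a b \<Longrightarrow> P b a \<Longrightarrow> a = b"
    and "sorted_wrt P xs" and "sorted_wrt P ys" and "mset xs = mset ys"
  shows "xs = ys"
  using assms(2-4)
proof (induction xs arbitrary: ys)
  case Nil
  then show ?case by simp
next
  case (Cons a xs)
  then obtain b ys' where ys: "ys = b # ys'"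
    by (cases ys) auto
  have "a = b"
  proof (rule ccontr)
    assume "a \<noteq> b"
    moreover have "a \<in> set ys" and "b \<in> set (a # xs)"
      using Cons.prems(3) ys by (metis list.set_intros(1) mset_eq_setD)+
    ultimately have "P b a" and "P a b"
      using Cons.prems(1,2) ys by auto
    with \<open>a \<noteq> b\<close> show False
      using antisym by blast
  qed
  with Cons.prems ys show ?case
    using Cons.IH by simp
qed

lemma sorted_wrt_insert_exists:
  assumes "transp P" and total: "\<forall>a\<in>D. \<forall>b\<in>D. P a b \<or> P b a"
    and "x \<in> D" and "set ys \<subseteq> D" and "sorted_wrt P ys"
  shows "\<exists>zs. mset zs = add_mset x (mset ys) \<and> sorted_wrt P zs"
  using assms(4,5)
proof (induction ys)
  case Nil
  show ?case by (intro exI[of _ "[x]"]) simp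
next
  case (Cons y ys)
  show ?case
  proof (cases "P x y")
    case True
    with Cons.prems \<open>transp P\<close> have "sorted_wrt P (x # y # ys)"
      by (auto dest: transpD)
    then show ?thesis by (intro exI[of _ "x # y # ys"]) simp
  next
    case False
    with total \<open>x \<in> D\<close> Cons.prems(1) have "P y x" by auto
    obtain zs where zs: "mset zs = add_mset x (mset ys)" "sorted_wrt P zs"
      using Cons by auto
    then have "set zs = insert x (set ys)"
      by (metis set_mset_add_mset_insert set_mset_mset)
    with zs \<open>P y x\<close> Cons.prems(2) have "sorted_wrt P (y # zs)" by auto
    with zs(1) show ?thesis by (intro exI[of _ "y # zs"]) simp
  qed
qed

lemma sorted_wrt_exists_mset:
  assumes "transp P" and "\<forall>a\<in>D. \<forall>b\<in>D. P a b \<or> P b a" and "set_mset X \<subseteq> D"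
  shows "\<exists>xs. mset xs = X \<and> sorted_wrt P xs"
  using assms(3)
proof (induction X)
  case empty
  show ?case by simp
next
  case (add x X)
  then obtain ys where "mset ys = X" "sorted_wrt P ys" by auto
  with add.prems show ?case
    using sorted_wrt_insert_exists[OF assms(1,2), of x ys] by auto
qed

lemma image_mset_inj_on_eq:
  assumes "inj_on f D" and "set_mset A \<subseteq> D" and "set_mset B \<subseteq> D"
    and "image_mset f A = image_mset f B"
  shows "A = B"
proof -
  have "inj_on f (set_mset A \<union> set_mset B)"
    by (rule inj_on_subset[OF assms(1)]) (use assms(2,3) in auto)
  then show ?thesis
    using image_mset_eq_image_mset_plusD[of f A B "{#}"] assms(4) by auto
qed

lemma ex_preimage_mset:
  assumes "set_mset T \<subseteq> f ` D"
  shows "\<exists>X. set_mset X \<subseteq> D \<and> image_mset f X = T"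
proof (intro exI conjI)
  show "set_mset (image_mset (inv_into D f) T) \<subseteq> D"
    using assms by (auto intro: inv_into_into)
  have "image_mset (f \<circ> inv_into D f) T = image_mset id T"
    using assms by (intro image_mset_cong) (auto intro: f_inv_into_f)
  then show "image_mset f (image_mset (inv_into D f) T) = T"
    by (simp add: multiset.map_comp)
qed

lemma ex_sorted_list_image_mset:
  assumes "transp P" and "\<forall>a\<in>D. \<forall>b\<in>D. P a b \<or> P b a" and "set_mset T \<subseteq> f ` D"
  shows "\<exists>xs. set xs \<subseteq> D \<and> sorted_wrt P xs \<and> image_mset f (mset xs) = T"
proof -
  obtain X where X: "set_mset X \<subseteq> D" "image_mset f X = T"
    using ex_preimage_mset[OF assms(3)] by blast
  moreover obtain xs where "mset xs = X" "sorted_wrt P xs"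
    using sorted_wrt_exists_mset[OF assms(1,2) X(1)] by blast
  ultimately show ?thesis
    by (intro exI[of _ xs]) auto
qed

lemma sorted_list_eq_if_image_mset_eq:
  assumes "inj_on f D" and "\<And>a b. P a b \<Longrightarrow> P b a \<Longrightarrow> a = b"
    and "set xs \<subseteq> D" "sorted_wrt P xs" and "set ys \<subseteq> D" "sorted_wrt P ys"
    and "image_mset f (mset xs) = image_mset f (mset ys)"
  shows "xs = ys"
proof -
  have "mset xs = mset ys"
    using image_mset_inj_on_eq[OF assms(1)] assms(3,5,7) by simp
  with assms(2,4,6) show ?thesis
    by (rule sorted_wrt_mset_unique)
qed

lemma nverts_pos: "0 < nverts t"
  by (cases t) simp

lemma nverts_less_Node: "s \<in># T \<Longrightarrow> nverts s < nverts (Node T)"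
  by (auto dest!: multi_member_split)

lemma lower_energy_right_comb:
  "lower_energy (right_comb xs) = Node (image_mset lower_energy (mset xs))"
  by (induction xs) (simp_all add: right_comb_def bullet_def)

lemma nverts_lower_energy_right_comb:
  "nverts (lower_energy (right_comb xs)) = Suc (sum_list (map (nverts \<circ> lower_energy) xs))"
  by (simp add: lower_energy_right_comb sum_mset_sum_list flip: mset_map)

text \<open>The degrees j_k of the recursion are not recorded: they are recovered as vertex counts of
  lower-energy terms.\<close>
definition comb_lists :: "(nat \<Rightarrow> mono set) \<Rightarrow> mono rel \<Rightarrow> nat \<Rightarrow> mono list set" where
  "comb_lists M R n = {xs. set xs \<subseteq> (\<Union>j\<in>{1..<n}. M j) \<and> sorted_wrt (\<lambda>a b. (b, a) \<in> R) xs
     \<and> sum_list (map (nverts \<circ> lower_energy) xs) = n - 1}"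

context
  fixes M :: "nat \<Rightarrow> mono set" and R :: "mono rel"
  assumes AG: "AG_family M R"
begin

lemma M_1: "M 1 = {Gen}"
  using AG by (simp add: AG_family_def)

lemma M_recursion:
  "2 \<le> n \<Longrightarrow> M n =
     {right_comb xs | xs js. xs \<noteq> [] \<and> length js = length xs
        \<and> (\<forall>k<length xs. 1 \<le> js ! k \<and> xs ! k \<in> M (js ! k))
        \<and> sum_list js = n - 1
        \<and> sorted_wrt (\<lambda>a b. (b, a) \<in> R) xs}"
  using AG by (simp add: AG_family_def)

lemma transp_converse_R: "transp (\<lambda>a b. (b, a) \<in> R)"
  using AG by (auto simp: AG_family_def linear_order_on_def partial_order_on_def
      preorder_on_def intro!: transpI dest: transD)

lemma antisym_R: "(b, a) \<in> R \<Longrightarrow> (a, b) \<in> R \<Longrightarrow> a = b"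
  using AG by (auto simp: AG_family_def linear_order_on_def partial_order_on_def dest: antisymD)

lemma total_R:
  assumes "J \<subseteq> {1..}"
  shows "\<forall>a\<in>(\<Union>j\<in>J. M j). \<forall>b\<in>(\<Union>j\<in>J. M j). (b, a) \<in> R \<or> (a, b) \<in> R"
proof (intro ballI)
  fix a b
  assume "a \<in> (\<Union>j\<in>J. M j)" "b \<in> (\<Union>j\<in>J. M j)"
  with assms have ab: "a \<in> (\<Union>j\<in>{1..}. M j)" "b \<in> (\<Union>j\<in>{1..}. M j)"
    by blast+
  have "linear_order_on (\<Union>j\<in>{1..}. M j) R"
    using AG by (simp add: AG_family_def)
  then have "refl_on (\<Union>j\<in>{1..}. M j) R" and "total_on (\<Union>j\<in>{1..}. M j) R"
    by (simp_all add: linear_order_on_def partial_order_on_def preorder_on_def)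
  with ab show "(b, a) \<in> R \<or> (a, b) \<in> R"
    unfolding total_on_def by (metis refl_onD)
qed

lemma nverts_lower_energy_M: "1 \<le> n \<Longrightarrow> x \<in> M n \<Longrightarrow> nverts (lower_energy x) = n"
proof (induction n arbitrary: x rule: less_induct)
  case (less n)
  show ?case
  proof (cases "n = 1")
    case True
    with less.prems(2) have "x = Gen"
      using M_1 by blast
    with True show ?thesis by (simp add: bullet_def)
  next
    case False
    with less.prems obtain xs js where x: "x = right_comb xs" "length js = length xs"
      "\<forall>k<length xs. 1 \<le> js ! k \<and> xs ! k \<in> M (js ! k)" "sum_list js = n - 1"
      using M_recursion[of n] by auto
    have "js = map (nverts \<circ> lower_energy) xs"
    proof (rule nth_equalityI)
      fix k
      assume k: "k < length js"
      then have "js ! k < n"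
        using elem_le_sum_list[OF k] x(4) \<open>n \<noteq> 1\<close> less.prems(1) by linarith
      with k x(2,3) show "js ! k = map (nverts \<circ> lower_energy) xs ! k"
        using less.IH by auto
    qed (use x(2) in simp)
    with x(1,4) \<open>n \<noteq> 1\<close> less.prems(1) show ?thesis
      by (simp add: nverts_lower_energy_right_comb)
  qed
qed

lemma M_eq_image_right_comb:
  assumes "2 \<le> n"
  shows "M n = right_comb ` comb_lists M R n"
proof
  show "M n \<subseteq> right_comb ` comb_lists M R n"
  proof
    fix x
    assume "x \<in> M n"
    then obtain xs js where x: "x = right_comb xs" "length js = length xs"
      "\<forall>k<length xs. 1 \<le> js ! k \<and> xs ! k \<in> M (js ! k)" "sum_list js = n - 1"
      "sorted_wrt (\<lambda>a b. (b, a) \<in> R) xs"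
      using M_recursion[OF assms] by auto
    have "js ! k < n" if "k < length xs" for k
      using elem_le_sum_list[of k js] that x(2,4) assms by linarith
    with x(3) have "set xs \<subseteq> (\<Union>j\<in>{1..<n}. M j)"
      by (fastforce simp: in_set_conv_nth)
    moreover have "js = map (nverts \<circ> lower_energy) xs"
      using x(2,3) nverts_lower_energy_M by (auto intro!: nth_equalityI)
    ultimately show "x \<in> right_comb ` comb_lists M R n"
      using x by (auto simp: comb_lists_def)
  qed
next
  show "right_comb ` comb_lists M R n \<subseteq> M n"
  proof
    fix x
    assume "x \<in> right_comb ` comb_lists M R n"
    then obtain xs where x: "x = right_comb xs" and xs: "xs \<in> comb_lists M R n"
      by blast
    define js where "js = map (nverts \<circ> lower_energy) xs"
    have "1 \<le> js ! k \<and> xs ! k \<in> M (js ! k)" if "k < length xs" for k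
    proof -
      have "xs ! k \<in> (\<Union>j\<in>{1..<n}. M j)"
        using xs nth_mem[OF that] by (auto simp: comb_lists_def)
      then obtain j where "1 \<le> j" "xs ! k \<in> M j"
        by auto
      with that show ?thesis
        using nverts_lower_energy_M by (simp add: js_def)
    qed
    moreover have "xs \<noteq> []"
      using xs assms by (auto simp: comb_lists_def)
    moreover have "length js = length xs" and "sum_list js = n - 1"
      and "sorted_wrt (\<lambda>a b. (b, a) \<in> R) xs"
      using xs by (simp_all add: comb_lists_def js_def)
    ultimately show "x \<in> M n"
      unfolding M_recursion[OF assms] using x by blast
  qed
qed

lemma inj_on_lower_energy_UN:
  assumes "J \<subseteq> {1..}" and "\<And>j. j \<in> J \<Longrightarrow> inj_on lower_energy (M j)"
  shows "inj_on lower_energy (\<Union>j\<in>J. M j)"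
proof (rule inj_onI)
  fix x y
  assume "x \<in> (\<Union>j\<in>J. M j)" "y \<in> (\<Union>j\<in>J. M j)" and eq: "lower_energy x = lower_energy y"
  then obtain i j where ij: "i \<in> J" "x \<in> M i" "j \<in> J" "y \<in> M j"
    by blast
  with assms(1) eq have "i = j"
    using nverts_lower_energy_M by (metis atLeast_iff subsetD)
  with ij eq show "x = y"
    using assms(2) by (auto dest: inj_onD)
qed

lemma inj_on_lower_energy_M: "1 \<le> n \<Longrightarrow> inj_on lower_energy (M n)"
proof (induction n rule: less_induct)
  case (less n)
  show ?case
  proof (cases "n = 1")
    case True
    with M_1 have "M n = {Gen}" by blast
    then show ?thesis by simp
  next
    case False
    with less.prems have n: "2 \<le> n" by simp
    have inj: "inj_on lower_energy (\<Union>j\<in>{1..<n}. M j)"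
      using less.IH by (intro inj_on_lower_energy_UN) auto
    show ?thesis
    proof (rule inj_onI)
      fix x y
      assume "x \<in> M n" "y \<in> M n" and eq: "lower_energy x = lower_energy y"
      then obtain xs ys where x: "x = right_comb xs" "xs \<in> comb_lists M R n"
        and y: "y = right_comb ys" "ys \<in> comb_lists M R n"
        unfolding M_eq_image_right_comb[OF n] by blast
      from eq x(1) y(1) have "image_mset lower_energy (mset xs) = image_mset lower_energy (mset ys)"
        by (simp add: lower_energy_right_comb)
      with x(2) y(2) have "xs = ys"
        using sorted_list_eq_if_image_mset_eq[OF inj antisym_R] by (simp add: comb_lists_def)
      with x(1) y(1) show "x = y"
        by simp
    qed
  qed
qed

lemma in_image_lower_energy_M: "1 \<le> n \<Longrightarrow> nverts t = n \<Longrightarrow> t \<in> lower_energy ` M n"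
proof (induction n arbitrary: t rule: less_induct)
  case (less n)
  obtain T where t: "t = Node T"
    by (cases t)
  show ?case
  proof (cases "n = 1")
    case True
    with M_1 have "M n = {Gen}" by blast
    have "T = {#}"
    proof (rule ccontr)
      assume "T \<noteq> {#}"
      then obtain s where "s \<in># T" by blast
      then have "nverts s < 1"
        using nverts_less_Node less.prems(2) t True by metis
      with nverts_pos[of s] show False by simp
    qed
    with t \<open>M n = {Gen}\<close> show ?thesis
      by (simp add: bullet_def)
  next
    case False
    with less.prems(1) have n: "2 \<le> n" by simp
    let ?U = "\<Union>j\<in>{1..<n}. M j"
    have T_sub: "set_mset T \<subseteq> lower_energy ` ?U"
    proof
      fix s
      assume "s \<in># T"
      then have "nverts s < n"
        using nverts_less_Node less.prems(2) t by blast
      moreover have "1 \<le> nverts s"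
        using nverts_pos[of s] by simp
      ultimately have "s \<in> lower_energy ` M (nverts s)" and "nverts s \<in> {1..<n}"
        using less.IH by auto
      then show "s \<in> lower_energy ` ?U"
        by blast
    qed
    have total: "\<forall>a\<in>?U. \<forall>b\<in>?U. (b, a) \<in> R \<or> (a, b) \<in> R"
      by (rule total_R) auto
    obtain xs where xs: "set xs \<subseteq> ?U" "sorted_wrt (\<lambda>a b. (b, a) \<in> R) xs"
      "image_mset lower_energy (mset xs) = T"
      using ex_sorted_list_image_mset[OF transp_converse_R total T_sub] by blast
    have "sum_list (map (nverts \<circ> lower_energy) xs) = sum_mset (image_mset nverts T)"
      by (simp add: xs(3)[symmetric] sum_mset_sum_list multiset.map_comp flip: mset_map)
    also have "\<dots> = n - 1"
      using less.prems(2) t by simp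
    finally have "xs \<in> comb_lists M R n"
      using xs(1,2) by (simp add: comb_lists_def)
    moreover have "t = lower_energy (right_comb xs)"
      using xs(3) t by (simp add: lower_energy_right_comb)
    ultimately show ?thesis
      unfolding M_eq_image_right_comb[OF n] by (blast intro: image_eqI)
  qed
qed

end

theorem lemma3p5:
  fixes M :: "nat \<Rightarrow> mono set" and R :: "mono rel" and n :: nat
  assumes "AG_family M R" and "1 \<le> n"
  shows "bij_betw lower_energy (M n) {t. nverts t = n}"
proof -
  have "lower_energy ` M n = {t. nverts t = n}"
    using nverts_lower_energy_M[OF assms] in_image_lower_energy_M[OF assms] by blast
  with inj_on_lower_energy_M[OF assms] show ?thesis
    by (simp add: bij_betw_def)
qed

end
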